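(* Let $n\ge1$, $m\in\mathbb Z_+^n$, and let $c_\alpha\in\mathbb C$ for $0\le\alpha\le m$ with $c_m\ne0$ (and $c_\alpha=0$ otherwise). Let $X_0=\{\tau\in\mathbb Z^n:\tau\ge0,\ \tau\not\ge m\}$, $\varphi:X_0\to\mathbb C$, and let $f:\mathbb Z_+^n\to\mathbb C$ be the solution of $\sum_{0\le\alpha\le m}c_\alpha f(x+\alpha)=0$ ($x\in\mathbb Z_+^n$), $f=\varphi$ on $X_0$. Assume the generating function $F(z)=\sum_{x\ge0}f(x)/z^{x+I}$ converges in some neighborhood of infinity. Then $F(z)$ is a rational function if and only if the generating function of the initial data $\Phi(z)=\sum_{\tau\in X_0}\varphi(\tau)/z^{\tau+I}$ is a rational function.
   Context: $x\le y$ is componentwise; $\tau\not\ge m$ means $\tau_k<m_k$ for some $k$; $I=(1,\dots,1)$; $z^x=\prod z_k^{x_k}$. The condition $c_m\ne0$ expresses that $m$ belongs to the set of shifts occurring in the equation; under it the Cauchy problem has a unique solution. *)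

theory Defs
  imports "HOL-Analysis.Analysis"
begin

text \<open>Multi-indices are functions 'n => nat over a finite index type 'n (so n = CARD('n) >= 1);
points of C^n are functions 'n => complex.\<close>

definition mpow :: "('n::finite \<Rightarrow> complex) \<Rightarrow> ('n \<Rightarrow> nat) \<Rightarrow> complex" where
  "mpow z x = (\<Prod>k\<in>UNIV. z k ^ x k)"

definition is_mpoly :: "(('n::finite \<Rightarrow> nat) \<Rightarrow> complex) \<Rightarrow> bool" where
  "is_mpoly a \<longleftrightarrow> finite {\<beta>. a \<beta> \<noteq> 0}"

definition mpoly_eval :: "(('n::finite \<Rightarrow> nat) \<Rightarrow> complex) \<Rightarrow> ('n \<Rightarrow> complex) \<Rightarrow> complex" where
  "mpoly_eval a z = (\<Sum>\<beta>\<in>{\<beta>. a \<beta> \<noteq> 0}. a \<beta> * mpow z \<beta>)"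

definition rational_on :: "('n::finite \<Rightarrow> complex) set \<Rightarrow> (('n \<Rightarrow> complex) \<Rightarrow> complex) \<Rightarrow> bool" where
  "rational_on U G \<longleftrightarrow> (\<exists>P Q. is_mpoly P \<and> is_mpoly Q \<and> Q \<noteq> (\<lambda>_. 0) \<and>
      (\<forall>z\<in>U. mpoly_eval Q z \<noteq> 0 \<longrightarrow> G z = mpoly_eval P z / mpoly_eval Q z))"

definition nbhd_inf :: "real \<Rightarrow> ('n::finite \<Rightarrow> complex) set" where
  "nbhd_inf R = {z. \<forall>k. R < norm (z k)}"

end

theory Submission
  imports Defs
begin

text \<open>
  Write F_A for the generating function of f restricted to a set A of multi-indices, so that
  F = F_UNIV and Phi = F_X0 with X0 = {x. \<not> m \<le> x}. Multiplying the recurrence at x by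
  z^-(x+1) and summing over x gives
    chi(z) F(z) = sum_{alpha \<le> m} c_alpha z^alpha F_{y. \<not> alpha \<le> y}(z),   chi(z) = sum_{alpha \<le> m} c_alpha z^alpha,
  where chi is a nonzero polynomial because c_m \<noteq> 0, and every set {y. \<not> alpha \<le> y} with
  alpha \<le> m lies in X0, where f = phi.

  Both directions therefore rest on one fact: if the generating function of g is rational, so is
  that of g restricted to {x. \<not> a \<le> x}. Cutting off one coordinate at a time reduces this to
  slabs {x. x_k < a}. For those, expand G = sum_j H_j / z_k^(j+1) with H_j independent of z_k and
  write G = P / Q with Q = sum_{i \<le> d} q_i z_k^i; comparing coefficients in Q G = P yields
  q_d H_r = (polynomial) - sum_{1 \<le> i \<le> min r d} q_(d-i) H_(r-i), so every H_j is rational.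
\<close>

section \<open>Polynomial functions\<close>

lemma mpow_fun_upd: "mpow (z(k := t)) \<beta> = mpow z (\<beta>(k := 0)) * t ^ \<beta> k"
proof -
  have "mpow (z(k := t)) \<beta> = t ^ \<beta> k * (\<Prod>l\<in>UNIV - {k}. z l ^ \<beta> l)"
    unfolding mpow_def by (subst prod.remove[of _ k]) (auto intro!: prod.cong)
  moreover have "mpow z (\<beta>(k := 0)) = (\<Prod>l\<in>UNIV - {k}. z l ^ \<beta> l)"
    unfolding mpow_def by (subst prod.remove[of _ k]) (auto intro!: prod.cong)
  ultimately show ?thesis by simp
qed

lemma mpow_split_var: "mpow z \<beta> = mpow z (\<beta>(k := 0)) * z k ^ \<beta> k"
  using mpow_fun_upd[of z k "z k" \<beta>] by simp

lemma mpow_fun_upd_indep: "\<beta> k = 0 \<Longrightarrow> mpow (z(k := t)) \<beta> = mpow z \<beta>"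
  using mpow_fun_upd[of z k t \<beta>] by (simp add: fun_upd_idem)

lemma mpow_exp_upd: "\<beta> k = 0 \<Longrightarrow> mpow z (\<beta>(k := i)) = mpow z \<beta> * z k ^ i"
  using mpow_fun_upd[of z k "z k" "\<beta>(k := i)"] by (simp add: fun_upd_idem)

lemma mpow_add: "mpow z (\<lambda>l. \<alpha> l + \<beta> l) = mpow z \<alpha> * mpow z \<beta>"
  unfolding mpow_def by (simp add: power_add prod.distrib)

lemma mpow_zero [simp]: "mpow z (\<lambda>_. 0) = 1"
  unfolding mpow_def by simp

lemma mpow_nonzero: "(\<And>l. z l \<noteq> 0) \<Longrightarrow> mpow z \<beta> \<noteq> 0"
  unfolding mpow_def by simp

lemma mpoly_eval_eq_sum:
  assumes "finite B" "{\<beta>. a \<beta> \<noteq> 0} \<subseteq> B"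
  shows "mpoly_eval a z = (\<Sum>\<beta>\<in>B. a \<beta> * mpow z \<beta>)"
  unfolding mpoly_eval_def using assms by (intro sum.mono_neutral_left) auto

lemma mpoly_eval_zero_coeffs: "mpoly_eval (\<lambda>_. 0) z = 0"
  unfolding mpoly_eval_def by simp

definition poly_fun :: "(('n::finite \<Rightarrow> complex) \<Rightarrow> complex) \<Rightarrow> bool" where
  "poly_fun g \<longleftrightarrow> (\<exists>a. is_mpoly a \<and> g = mpoly_eval a)"

lemma poly_funI:
  fixes e :: "'i \<Rightarrow> 'n::finite \<Rightarrow> nat"
  assumes "finite I" "\<And>z. g z = (\<Sum>i\<in>I. a i * mpow z (e i))"
  shows "poly_fun g"
proof -
  define b where "b \<beta> = (\<Sum>i\<in>{i\<in>I. e i = \<beta>}. a i)" for \<beta>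
  have supp: "{\<beta>. b \<beta> \<noteq> 0} \<subseteq> e ` I"
    unfolding b_def by (auto elim: sum.not_neutral_contains_not_neutral)
  have "g z = mpoly_eval b z" for z
  proof -
    have "g z = (\<Sum>\<beta>\<in>e ` I. \<Sum>i\<in>{i\<in>I. e i = \<beta>}. a i * mpow z (e i))"
      unfolding assms(2) by (rule sum.image_gen[OF assms(1)])
    also have "\<dots> = (\<Sum>\<beta>\<in>e ` I. b \<beta> * mpow z \<beta>)"
      unfolding b_def sum_distrib_right by (intro sum.cong) auto
    also have "\<dots> = mpoly_eval b z"
      by (rule mpoly_eval_eq_sum[symmetric]) (use assms(1) supp in auto)
    finally show ?thesis .
  qed
  moreover have "is_mpoly b"
    unfolding is_mpoly_def using finite_subset[OF supp] assms(1) by blast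
  ultimately show ?thesis unfolding poly_fun_def by blast
qed

lemma poly_funE:
  assumes "poly_fun g"
  obtains a where "\<And>z. g z = (\<Sum>\<beta>\<in>{\<beta>. a \<beta> \<noteq> 0}. a \<beta> * mpow z \<beta>)"
    "finite {\<beta>. a \<beta> \<noteq> 0}"
proof -
  obtain a where "is_mpoly a" "g = mpoly_eval a"
    using assms unfolding poly_fun_def by blast
  then show thesis
    using that[of a] unfolding is_mpoly_def mpoly_eval_def by simp
qed

lemma poly_fun_mpow: "poly_fun (\<lambda>z. mpow z \<beta>)"
  by (rule poly_funI[of "{()}" _ "\<lambda>_. 1" "\<lambda>_. \<beta>"]) auto

lemma poly_fun_const: "poly_fun (\<lambda>z. c)"
  by (rule poly_funI[of "{()}" _ "\<lambda>_. c" "\<lambda>_. \<lambda>_. 0"]) auto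

lemma poly_fun_var: "poly_fun (\<lambda>z. z k)"
proof (rule poly_funI[of "{()}" _ "\<lambda>_. 1" "\<lambda>_. (\<lambda>_. 0)(k := 1)"])
  show "z k = (\<Sum>i\<in>{()}. 1 * mpow z ((\<lambda>_. 0)(k := 1)))" for z :: "'a \<Rightarrow> complex"
    using mpow_exp_upd[of "\<lambda>_. 0" k z 1] by simp
qed simp

lemma poly_fun_add:
  assumes "poly_fun g" "poly_fun h"
  shows "poly_fun (\<lambda>z. g z + h z)"
proof -
  obtain a where a: "\<And>z. g z = (\<Sum>\<beta>\<in>{\<beta>. a \<beta> \<noteq> 0}. a \<beta> * mpow z \<beta>)" "finite {\<beta>. a \<beta> \<noteq> 0}"
    using assms(1) by (rule poly_funE) blast
  obtain b where b: "\<And>z. h z = (\<Sum>\<beta>\<in>{\<beta>. b \<beta> \<noteq> 0}. b \<beta> * mpow z \<beta>)" "finite {\<beta>. b \<beta> \<noteq> 0}"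
    using assms(2) by (rule poly_funE) blast
  show ?thesis
    by (rule poly_funI[where I = "{\<beta>. a \<beta> \<noteq> 0} <+> {\<beta>. b \<beta> \<noteq> 0}"
          and a = "case_sum a b" and e = "case_sum id id"]) (simp_all add: a b sum.Plus)
qed

lemma poly_fun_mult:
  assumes "poly_fun g" "poly_fun h"
  shows "poly_fun (\<lambda>z. g z * h z)"
proof -
  obtain a where a: "\<And>z. g z = (\<Sum>\<beta>\<in>{\<beta>. a \<beta> \<noteq> 0}. a \<beta> * mpow z \<beta>)" "finite {\<beta>. a \<beta> \<noteq> 0}"
    using assms(1) by (rule poly_funE) blast
  obtain b where b: "\<And>z. h z = (\<Sum>\<beta>\<in>{\<beta>. b \<beta> \<noteq> 0}. b \<beta> * mpow z \<beta>)" "finite {\<beta>. b \<beta> \<noteq> 0}"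
    using assms(2) by (rule poly_funE) blast
  show ?thesis
    by (rule poly_funI[where I = "{\<beta>. a \<beta> \<noteq> 0} \<times> {\<beta>. b \<beta> \<noteq> 0}"
          and a = "\<lambda>(\<beta>, \<gamma>). a \<beta> * b \<gamma>" and e = "\<lambda>(\<beta>, \<gamma>) l. \<beta> l + \<gamma> l"])
      (auto simp: a b sum_product sum.cartesian_product mpow_add mult_ac intro!: sum.cong)
qed

lemma poly_fun_prod: "finite I \<Longrightarrow> (\<And>i. i \<in> I \<Longrightarrow> poly_fun (g i)) \<Longrightarrow> poly_fun (\<lambda>z. \<Prod>i\<in>I. g i z)"
  by (induction I rule: finite_induct) (auto intro: poly_fun_mult poly_fun_const)

lemma poly_fun_power: "poly_fun g \<Longrightarrow> poly_fun (\<lambda>z. g z ^ n)"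
  by (induction n) (auto intro: poly_fun_mult poly_fun_const)

lemma poly_fun_if: "poly_fun g \<Longrightarrow> poly_fun (\<lambda>z. if b then g z else 0)"
  by (cases b) (auto intro: poly_fun_const)

lemma poly_fun_on_line:
  assumes "poly_fun g"
  obtains p where "\<And>t. g (\<lambda>k. u k + t * v k) = poly p t"
proof -
  obtain a where a: "\<And>z. g z = (\<Sum>\<beta>\<in>{\<beta>. a \<beta> \<noteq> 0}. a \<beta> * mpow z \<beta>)"
    using assms by (rule poly_funE) blast
  define p where "p = (\<Sum>\<beta>\<in>{\<beta>. a \<beta> \<noteq> 0}. smult (a \<beta>) (\<Prod>k\<in>UNIV. [:u k, v k:] ^ \<beta> k))"
  have "g (\<lambda>k. u k + t * v k) = poly p t" for t
    unfolding a p_def mpow_def by (simp add: poly_sum poly_prod mult.commute)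
  then show thesis by (rule that)
qed

text \<open>On the complex line through \<open>u\<close> and \<open>w\<close> both functions become univariate
  polynomials that are not identically zero.\<close>

lemma poly_fun_common_nonzero:
  assumes "poly_fun g" "poly_fun h" "g u \<noteq> 0" "h w \<noteq> 0"
  shows "\<exists>z. g z \<noteq> 0 \<and> h z \<noteq> 0"
proof -
  define v where "v k = w k - u k" for k
  obtain p where p: "\<And>t. g (\<lambda>k. u k + t * v k) = poly p t"
    using assms(1) by (rule poly_fun_on_line[where u = u and v = v]) blast
  obtain q where q: "\<And>t. h (\<lambda>k. u k + t * v k) = poly q t"
    using assms(2) by (rule poly_fun_on_line[where u = u and v = v]) blast
  have "poly p 0 \<noteq> 0" "poly q 1 \<noteq> 0"
    using assms(3,4) p[of 0] q[of 1] by (simp_all add: v_def)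
  then have "p * q \<noteq> 0" by auto
  then obtain t where "poly (p * q) t \<noteq> 0"
    using poly_all_0_iff_0 by blast
  then have "g (\<lambda>k. u k + t * v k) \<noteq> 0 \<and> h (\<lambda>k. u k + t * v k) \<noteq> 0"
    using p q by simp
  then show ?thesis by blast
qed

definition mpoly_slice :: "(('n::finite \<Rightarrow> nat) \<Rightarrow> complex) \<Rightarrow> 'n \<Rightarrow> nat \<Rightarrow> ('n \<Rightarrow> nat) \<Rightarrow> complex" where
  "mpoly_slice a k i \<gamma> = (if \<gamma> k = 0 then a (\<gamma>(k := i)) else 0)"

lemma is_mpoly_slice:
  assumes "is_mpoly a"
  shows "is_mpoly (mpoly_slice a k i)"
proof -
  have "{\<gamma>. mpoly_slice a k i \<gamma> \<noteq> 0} \<subseteq> (\<lambda>\<beta>. \<beta>(k := 0)) ` {\<beta>. a \<beta> \<noteq> 0}"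
  proof
    fix \<gamma> assume "\<gamma> \<in> {\<gamma>. mpoly_slice a k i \<gamma> \<noteq> 0}"
    then have "\<gamma> = (\<gamma>(k := i))(k := 0)" "a (\<gamma>(k := i)) \<noteq> 0"
      by (auto simp: mpoly_slice_def split: if_splits)
    then show "\<gamma> \<in> (\<lambda>\<beta>. \<beta>(k := 0)) ` {\<beta>. a \<beta> \<noteq> 0}" by blast
  qed
  with assms show ?thesis unfolding is_mpoly_def by (rule finite_surj)
qed

lemma mpoly_eval_slice_fun_upd: "mpoly_eval (mpoly_slice a k i) (z(k := t)) = mpoly_eval (mpoly_slice a k i) z"
  unfolding mpoly_eval_def
  by (intro sum.cong refl) (simp add: mpow_fun_upd_indep mpoly_slice_def split: if_splits)

lemma mpoly_degree_bound:
  assumes "is_mpoly a"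
  obtains d where "\<And>\<beta>. a \<beta> \<noteq> 0 \<Longrightarrow> \<beta> k \<le> d"
proof -
  have "finite ((\<lambda>\<beta>. \<beta> k) ` {\<beta>. a \<beta> \<noteq> 0})"
    using assms unfolding is_mpoly_def by simp
  then show thesis
    using that by (auto simp: finite_nat_set_iff_bounded_le)
qed

lemma mpoly_eval_by_slices:
  assumes "is_mpoly a" "\<And>\<beta>. a \<beta> \<noteq> 0 \<Longrightarrow> \<beta> k \<le> d"
  shows "mpoly_eval a z = (\<Sum>i\<le>d. mpoly_eval (mpoly_slice a k i) z * z k ^ i)"
proof -
  let ?S = "{\<beta>. a \<beta> \<noteq> 0}"
  have slice: "(\<Sum>\<beta>\<in>{\<beta>\<in>?S. \<beta> k = i}. a \<beta> * mpow z \<beta>) = mpoly_eval (mpoly_slice a k i) z * z k ^ i"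
    for i
    unfolding mpoly_eval_def sum_distrib_right
    by (rule sum.reindex_bij_witness[where i = "\<lambda>\<gamma>. \<gamma>(k := i)" and j = "\<lambda>\<beta>. \<beta>(k := 0)"])
      (auto simp: mpoly_slice_def mpow_exp_upd mpow_split_var[symmetric] fun_upd_idem split: if_splits)
  have "mpoly_eval a z = (\<Sum>i\<le>d. \<Sum>\<beta>\<in>{\<beta>\<in>?S. \<beta> k = i}. a \<beta> * mpow z \<beta>)"
    unfolding mpoly_eval_def
    by (rule sum.group[symmetric]) (use assms in \<open>auto simp: is_mpoly_def\<close>)
  also have "\<dots> = (\<Sum>i\<le>d. mpoly_eval (mpoly_slice a k i) z * z k ^ i)"
    by (rule sum.cong[OF refl]) (rule slice)
  finally show ?thesis .
qed

lemma mpoly_slice_vars: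
  assumes "\<And>\<beta> l. a \<beta> \<noteq> 0 \<Longrightarrow> l \<notin> insert k S \<Longrightarrow> \<beta> l = 0"
    and "mpoly_slice a k i \<gamma> \<noteq> 0" "l \<notin> S"
  shows "\<gamma> l = 0"
proof -
  have \<gamma>: "\<gamma> k = 0" "a (\<gamma>(k := i)) \<noteq> 0"
    using assms(2) by (auto simp: mpoly_slice_def split: if_splits)
  show ?thesis
  proof (cases "l = k")
    case False
    have "(\<gamma>(k := i)) l = 0"
      by (rule assms(1)[OF \<gamma>(2)]) (use assms(3) False in simp)
    with False show ?thesis by simp
  qed (use \<gamma> in simp)
qed

lemma mpoly_eval_fun_upd_eq_poly:
  assumes "is_mpoly a" "\<And>\<beta>. a \<beta> \<noteq> 0 \<Longrightarrow> \<beta> k \<le> d"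
  shows "mpoly_eval a (z(k := t)) = poly (\<Sum>i\<le>d. monom (mpoly_eval (mpoly_slice a k i) z) i) t"
  by (simp add: poly_sum poly_monom mpoly_eval_by_slices[OF assms] mpoly_eval_slice_fun_upd)

lemma mpoly_eval_nonzero:
  assumes "is_mpoly a" "a \<beta> \<noteq> 0"
  shows "\<exists>z. mpoly_eval a z \<noteq> 0"
proof -
  txt \<open>Induction on the variables: the coefficient of \<open>z k ^ \<beta> k\<close> is nonzero somewhere by induction,
    and then some value of \<open>z k\<close> avoids the finitely many roots in that variable.\<close>
  have "\<exists>z. mpoly_eval a z \<noteq> 0"
    if "finite S" "is_mpoly a" "a \<beta> \<noteq> 0" "\<And>\<gamma> l. a \<gamma> \<noteq> 0 \<Longrightarrow> l \<notin> S \<Longrightarrow> \<gamma> l = 0"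
    for S :: "'a set" and a \<beta>
    using that
  proof (induction S arbitrary: a \<beta> rule: finite_induct)
    case empty
    then have "\<beta> = (\<lambda>_. 0)" "{\<gamma>. a \<gamma> \<noteq> 0} \<subseteq> {\<lambda>_. 0}" by auto
    then have "mpoly_eval a z = a \<beta>" for z
      using mpoly_eval_eq_sum[of "{\<lambda>_. 0}" a z] by simp
    with empty.prems(2) show ?case by simp
  next
    case (insert k S)
    obtain d where d: "\<And>\<gamma>. a \<gamma> \<noteq> 0 \<Longrightarrow> \<gamma> k \<le> d"
      using insert.prems(1) by (rule mpoly_degree_bound[where k = k]) blast
    have "\<exists>z. mpoly_eval (mpoly_slice a k (\<beta> k)) z \<noteq> 0"
    proof (rule insert.IH)
      show "is_mpoly (mpoly_slice a k (\<beta> k))" using insert.prems(1) by (rule is_mpoly_slice)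
      show "mpoly_slice a k (\<beta> k) (\<beta>(k := 0)) \<noteq> 0"
        using insert.prems(2) by (simp add: mpoly_slice_def)
      show "\<gamma> l = 0" if "mpoly_slice a k (\<beta> k) \<gamma> \<noteq> 0" "l \<notin> S" for \<gamma> l
        using insert.prems(3) that by (rule mpoly_slice_vars)
    qed
    then obtain z where z: "mpoly_eval (mpoly_slice a k (\<beta> k)) z \<noteq> 0" ..
    define p where "p = (\<Sum>i\<le>d. monom (mpoly_eval (mpoly_slice a k i) z) i)"
    have "coeff p (\<beta> k) \<noteq> 0"
      using z d[OF insert.prems(2)] by (simp add: p_def coeff_sum)
    then have "p \<noteq> 0" by auto
    then obtain t where "poly p t \<noteq> 0"
      using poly_all_0_iff_0 by blast
    moreover have "mpoly_eval a (z(k := t)) = poly p t"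
      unfolding p_def by (rule mpoly_eval_fun_upd_eq_poly[OF insert.prems(1) d])
    ultimately have "mpoly_eval a (z(k := t)) \<noteq> 0" by simp
    then show ?case by blast
  qed
  from this[OF finite assms, of UNIV] show ?thesis by simp
qed

lemma poly_fun_expand_var:
  assumes "poly_fun g"
  obtains d q where "\<And>i. poly_fun (q i)" "\<And>i z t. q i (z(k := t)) = q i z"
    "\<And>z. g z = (\<Sum>i\<le>d. q i z * z k ^ i)" "(\<exists>z. g z \<noteq> 0) \<Longrightarrow> \<exists>z. q d z \<noteq> 0"
proof (cases "\<exists>z. g z \<noteq> 0")
  case False
  then show thesis
    using that[of "\<lambda>_ _. 0" 0] poly_fun_const by auto
next
  case True
  then obtain a z0 where a: "is_mpoly a" "g = mpoly_eval a" "mpoly_eval a z0 \<noteq> 0"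
    using assms unfolding poly_fun_def by blast
  let ?S = "{\<beta>. a \<beta> \<noteq> 0}"
  have "?S \<noteq> {}"
  proof
    assume "?S = {}"
    then have "mpoly_eval a z0 = 0" unfolding mpoly_eval_def by (simp only: sum.empty)
    with a(3) show False ..
  qed
  moreover have fin: "finite ((\<lambda>\<beta>. \<beta> k) ` ?S)" using a(1) unfolding is_mpoly_def by simp
  ultimately obtain \<beta>0 where \<beta>0: "a \<beta>0 \<noteq> 0" "\<beta>0 k = Max ((\<lambda>\<beta>. \<beta> k) ` ?S)"
    using Max_in[OF fin] by fastforce
  define d where "d = Max ((\<lambda>\<beta>. \<beta> k) ` ?S)"
  have d: "\<beta> k \<le> d" if "a \<beta> \<noteq> 0" for \<beta>
    unfolding d_def using fin that by (auto intro: Max_ge)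
  show thesis
  proof (rule that[of "\<lambda>i. mpoly_eval (mpoly_slice a k i)" d])
    show "poly_fun (mpoly_eval (mpoly_slice a k i))" for i
      unfolding poly_fun_def using is_mpoly_slice[OF a(1)] by blast
    show "mpoly_eval (mpoly_slice a k i) (z(k := t)) = mpoly_eval (mpoly_slice a k i) z" for i z t
      by (rule mpoly_eval_slice_fun_upd)
    show "g z = (\<Sum>i\<le>d. mpoly_eval (mpoly_slice a k i) z * z k ^ i)" for z
      unfolding a(2) using a(1) d by (rule mpoly_eval_by_slices)
    have "mpoly_slice a k d (\<beta>0(k := 0)) \<noteq> 0"
      using \<beta>0 by (simp add: mpoly_slice_def d_def \<beta>0(2)[symmetric])
    then show "\<exists>z. mpoly_eval (mpoly_slice a k d) z \<noteq> 0"
      using mpoly_eval_nonzero is_mpoly_slice[OF a(1)] by blast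
  qed
qed

section \<open>Rational functions\<close>

lemma rational_on_iff_poly_fun:
  "rational_on V G \<longleftrightarrow>
    (\<exists>P Q. poly_fun P \<and> poly_fun Q \<and> (\<exists>w. Q w \<noteq> 0) \<and> (\<forall>z\<in>V. Q z \<noteq> 0 \<longrightarrow> G z = P z / Q z))"
proof
  assume "rational_on V G"
  then obtain P Q \<beta> where PQ: "is_mpoly P" "is_mpoly Q" "Q \<beta> \<noteq> 0"
      "\<forall>z\<in>V. mpoly_eval Q z \<noteq> 0 \<longrightarrow> G z = mpoly_eval P z / mpoly_eval Q z"
    unfolding rational_on_def by fastforce
  then show "\<exists>P Q. poly_fun P \<and> poly_fun Q \<and> (\<exists>w. Q w \<noteq> 0) \<and> (\<forall>z\<in>V. Q z \<noteq> 0 \<longrightarrow> G z = P z / Q z)"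
    using mpoly_eval_nonzero[OF PQ(2,3)] unfolding poly_fun_def by blast
next
  assume "\<exists>P Q. poly_fun P \<and> poly_fun Q \<and> (\<exists>w. Q w \<noteq> 0) \<and> (\<forall>z\<in>V. Q z \<noteq> 0 \<longrightarrow> G z = P z / Q z)"
  then obtain p q w where pq: "is_mpoly p" "is_mpoly q" "mpoly_eval q w \<noteq> 0"
      "\<forall>z\<in>V. mpoly_eval q z \<noteq> 0 \<longrightarrow> G z = mpoly_eval p z / mpoly_eval q z"
    unfolding poly_fun_def by blast
  moreover have "q \<noteq> (\<lambda>_. 0)"
    using pq(3) mpoly_eval_zero_coeffs by metis
  ultimately show "rational_on V G" unfolding rational_on_def by blast
qed

lemma rational_onI:
  assumes "poly_fun P" "poly_fun Q" "Q w \<noteq> 0" "\<And>z. z \<in> V \<Longrightarrow> Q z \<noteq> 0 \<Longrightarrow> G z = P z / Q z"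
  shows "rational_on V G"
  unfolding rational_on_iff_poly_fun using assms by blast

lemma rational_onE:
  assumes "rational_on V G"
  obtains P Q w where "poly_fun P" "poly_fun Q" "Q w \<noteq> 0"
    "\<And>z. z \<in> V \<Longrightarrow> Q z \<noteq> 0 \<Longrightarrow> G z = P z / Q z"
  using assms unfolding rational_on_iff_poly_fun by blast

lemma rational_on_eq_outside_zeros:
  assumes "rational_on V G" "poly_fun B" "B w \<noteq> 0"
    and "\<And>z. z \<in> U \<Longrightarrow> B z \<noteq> 0 \<Longrightarrow> z \<in> V \<and> H z = G z"
  shows "rational_on U H"
proof -
  obtain P Q w' where PQ: "poly_fun P" "poly_fun Q" "Q w' \<noteq> 0"
      "\<And>z. z \<in> V \<Longrightarrow> Q z \<noteq> 0 \<Longrightarrow> G z = P z / Q z"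
    using assms(1) by (rule rational_onE) blast
  obtain w'' where "Q w'' * B w'' \<noteq> 0"
    using poly_fun_common_nonzero[OF PQ(2) assms(2) PQ(3) assms(3)] by auto
  then show ?thesis
    by (intro rational_onI[where P = "\<lambda>z. P z * B z" and Q = "\<lambda>z. Q z * B z" and w = w''])
      (use assms PQ in \<open>auto intro: poly_fun_mult\<close>)
qed

lemma rational_on_cong: "rational_on V G \<Longrightarrow> (\<And>z. z \<in> V \<Longrightarrow> H z = G z) \<Longrightarrow> rational_on V H"
  by (rule rational_on_eq_outside_zeros[where B = "\<lambda>_. 1" and w = undefined]) (auto intro: poly_fun_const)

lemma rational_on_poly_fun: "poly_fun P \<Longrightarrow> rational_on V P"
  by (rule rational_onI[where Q = "\<lambda>_. 1"]) (auto intro: poly_fun_const)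

lemma rational_on_add:
  assumes "rational_on V G" "rational_on V H"
  shows "rational_on V (\<lambda>z. G z + H z)"
proof -
  obtain P Q w where PQ: "poly_fun P" "poly_fun Q" "Q w \<noteq> 0"
      "\<And>z. z \<in> V \<Longrightarrow> Q z \<noteq> 0 \<Longrightarrow> G z = P z / Q z"
    using assms(1) by (rule rational_onE) blast
  obtain P' Q' w' where PQ': "poly_fun P'" "poly_fun Q'" "Q' w' \<noteq> 0"
      "\<And>z. z \<in> V \<Longrightarrow> Q' z \<noteq> 0 \<Longrightarrow> H z = P' z / Q' z"
    using assms(2) by (rule rational_onE) blast
  obtain w'' where "Q w'' * Q' w'' \<noteq> 0"
    using poly_fun_common_nonzero[OF PQ(2) PQ'(2) PQ(3) PQ'(3)] by auto
  then show ?thesis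
    by (intro rational_onI[where P = "\<lambda>z. P z * Q' z + P' z * Q z" and Q = "\<lambda>z. Q z * Q' z" and w = w''])
      (use PQ PQ' in \<open>auto intro: poly_fun_add poly_fun_mult simp: add_divide_distrib\<close>)
qed

lemma rational_on_mult:
  assumes "rational_on V G" "rational_on V H"
  shows "rational_on V (\<lambda>z. G z * H z)"
proof -
  obtain P Q w where PQ: "poly_fun P" "poly_fun Q" "Q w \<noteq> 0"
      "\<And>z. z \<in> V \<Longrightarrow> Q z \<noteq> 0 \<Longrightarrow> G z = P z / Q z"
    using assms(1) by (rule rational_onE) blast
  obtain P' Q' w' where PQ': "poly_fun P'" "poly_fun Q'" "Q' w' \<noteq> 0"
      "\<And>z. z \<in> V \<Longrightarrow> Q' z \<noteq> 0 \<Longrightarrow> H z = P' z / Q' z"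
    using assms(2) by (rule rational_onE) blast
  obtain w'' where "Q w'' * Q' w'' \<noteq> 0"
    using poly_fun_common_nonzero[OF PQ(2) PQ'(2) PQ(3) PQ'(3)] by auto
  then show ?thesis
    by (intro rational_onI[where P = "\<lambda>z. P z * P' z" and Q = "\<lambda>z. Q z * Q' z" and w = w''])
      (use PQ PQ' in \<open>auto intro: poly_fun_mult\<close>)
qed

lemma rational_on_divide_poly_fun:
  assumes "rational_on V G" "poly_fun B" "B w \<noteq> 0"
  shows "rational_on V (\<lambda>z. G z / B z)"
proof -
  obtain P Q w' where PQ: "poly_fun P" "poly_fun Q" "Q w' \<noteq> 0"
      "\<And>z. z \<in> V \<Longrightarrow> Q z \<noteq> 0 \<Longrightarrow> G z = P z / Q z"
    using assms(1) by (rule rational_onE) blast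
  obtain w'' where "Q w'' * B w'' \<noteq> 0"
    using poly_fun_common_nonzero[OF PQ(2) assms(2) PQ(3) assms(3)] by auto
  then show ?thesis
    by (intro rational_onI[where P = P and Q = "\<lambda>z. Q z * B z" and w = w''])
      (use PQ assms(2) in \<open>auto intro: poly_fun_mult\<close>)
qed

lemma rational_on_diff:
  assumes "rational_on V G" "rational_on V H"
  shows "rational_on V (\<lambda>z. G z - H z)"
proof -
  have "rational_on V (\<lambda>z. G z + (- 1) * H z)"
    by (intro rational_on_add rational_on_mult rational_on_poly_fun poly_fun_const assms)
  then show ?thesis by simp
qed

lemma rational_on_sum:
  "finite I \<Longrightarrow> (\<And>i. i \<in> I \<Longrightarrow> rational_on V (G i)) \<Longrightarrow> rational_on V (\<lambda>z. \<Sum>i\<in>I. G i z)"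
  by (induction I rule: finite_induct) (auto intro: rational_on_add rational_on_poly_fun poly_fun_const)

section \<open>Power series multiplied by polynomials\<close>

lemma fps_of_poly_mult_eqI:
  fixes h :: "complex fps" and A B :: "complex poly"
  assumes h: "fps_conv_radius h > 0" and A: "A \<noteq> 0"
    and eq: "\<forall>\<^sub>F w in at 0. poly A w \<noteq> 0 \<longrightarrow> poly A w * eval_fps h w = poly B w"
  shows "fps_of_poly A * h = fps_of_poly B"
proof -
  define L where "L = fps_of_poly A * h"
  obtain r where r0: "0 < ereal r" and r: "ereal r < fps_conv_radius h"
    using ereal_dense2[OF h] by blast
  from r0 have "0 < r" by simp
  have radL: "fps_conv_radius h \<le> fps_conv_radius L"
    using fps_conv_radius_mult[of "fps_of_poly A" h] unfolding L_def
    by (simp only: fps_conv_radius_fps_of_poly min_def) (auto split: if_splits)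
  have "\<forall>\<^sub>F w in at 0. poly A w \<noteq> 0"
    using islimpt_finite[OF poly_roots_finite[OF A], of 0] unfolding islimpt_iff_eventually by simp
  moreover have "\<forall>\<^sub>F w in at 0. norm w < r"
    using eventually_at_ball'[OF \<open>0 < r\<close>, of 0 UNIV] by (rule eventually_mono) simp
  ultimately have "\<forall>\<^sub>F w in at 0. eval_fps (fps_X * L) w = eval_fps (fps_X * fps_of_poly B) w"
    using eq
  proof eventually_elim
    case (elim w)
    have wh: "ereal (norm w) < fps_conv_radius h"
      by (rule order.strict_trans[OF _ r]) (use elim(2) in simp)
    have "eval_fps L w = poly A w * eval_fps h w"
      unfolding L_def by (subst eval_fps_mult) (use wh in simp_all)
    moreover have "eval_fps (fps_X * L) w = w * eval_fps L w"
      by (subst eval_fps_mult) (use wh radL in \<open>simp_all add: less_le_trans\<close>)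
    ultimately show ?case
      using elim(1,3) by (subst eval_fps_mult) simp_all
  qed
  txt \<open>The factor \<open>fps_X\<close> makes both sides vanish at \<open>0\<close>, so they agree on a full neighbourhood.\<close>
  then have "\<forall>\<^sub>F w in nhds 0. eval_fps (fps_X * L) w = eval_fps (fps_X * fps_of_poly B) w"
    by (simp add: eventually_nhds_conv_at eval_fps_at_0)
  moreover have "fps_conv_radius (fps_X * L) > 0"
    using fps_conv_radius_mult[of fps_X L] radL h by (simp add: order_less_le_trans)
  moreover have "fps_conv_radius (fps_X * fps_of_poly B) > 0"
    using fps_conv_radius_mult[of fps_X "fps_of_poly B"] by simp
  ultimately have "fps_X * L = fps_X * fps_of_poly B"
    by (intro eval_fps_eqD) auto
  then show ?thesis unfolding L_def by simp
qed

lemma poly_reversed_monoms: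
  fixes c :: "nat \<Rightarrow> 'a::field"
  assumes "w \<noteq> 0"
  shows "poly (\<Sum>s\<le>n. monom (c (n - s)) s) w = w ^ n * (\<Sum>i\<le>n. c i * (1 / w) ^ i)"
proof -
  have "poly (\<Sum>s\<le>n. monom (c (n - s)) s) w = (\<Sum>s\<le>n. c (n - s) * w ^ s)"
    by (simp add: poly_sum poly_monom)
  also have "\<dots> = (\<Sum>i\<le>n. c i * w ^ (n - i))"
    by (rule sum.reindex_bij_witness[where i = "\<lambda>i. n - i" and j = "\<lambda>s. n - s"]) auto
  also have "\<dots> = w ^ n * (\<Sum>i\<le>n. c i * (1 / w) ^ i)"
    unfolding sum_distrib_left
    by (intro sum.cong refl) (use assms in \<open>simp add: power_diff power_one_over\<close>)
  finally show ?thesis .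
qed

lemma fps_conv_radius_pos_if_summable:
  fixes H :: "nat \<Rightarrow> complex"
  assumes "summable (\<lambda>j. H j * w ^ j)" "w \<noteq> 0"
  shows "fps_conv_radius (Abs_fps H) > 0"
proof -
  have "0 < ereal (norm w)" using assms(2) by simp
  also have "ereal (norm w) \<le> fps_conv_radius (Abs_fps H)"
    using conv_radius_geI[OF assms(1)] by (simp add: fps_conv_radius_def)
  finally show ?thesis .
qed

text \<open>Multiplying the identity \<open>eq\<close> by \<open>w ^ (d + E + 1)\<close> clears all negative powers of \<open>w\<close>.\<close>

lemma laurent_fps_identity:
  fixes H q p :: "nat \<Rightarrow> complex" and G :: "complex \<Rightarrow> complex"
  assumes qd: "q d \<noteq> 0" and \<rho>: "\<rho> > 0"
    and sums: "\<And>w. w \<noteq> 0 \<Longrightarrow> norm w < \<rho> \<Longrightarrow> (\<lambda>j. H j * w ^ (j + 1)) sums G w"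
    and eq: "\<And>w. w \<noteq> 0 \<Longrightarrow> norm w < \<rho> \<Longrightarrow> (\<Sum>i\<le>d. q i * (1 / w) ^ i) \<noteq> 0 \<Longrightarrow>
               (\<Sum>i\<le>d. q i * (1 / w) ^ i) * G w = (\<Sum>i\<le>E. p i * (1 / w) ^ i)"
  shows "fps_of_poly (monom 1 (E + 1) * (\<Sum>s\<le>d. monom (q (d - s)) s)) * Abs_fps H =
    fps_of_poly (monom 1 d * (\<Sum>s\<le>E. monom (p (E - s)) s))"
    (is "fps_of_poly (monom 1 (E + 1) * ?A) * _ = fps_of_poly (monom 1 d * ?B)")
proof (rule fps_of_poly_mult_eqI)
  have "(\<lambda>j. H j * complex_of_real (\<rho> / 2) ^ (j + 1)) sums G (\<rho> / 2)"
    using \<rho> by (intro sums) auto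
  from summable_mult2[OF sums_summable[OF this], of "2 / \<rho>"]
  have "summable (\<lambda>j. H j * complex_of_real (\<rho> / 2) ^ j)"
    using \<rho> by (simp add: field_simps)
  then show "fps_conv_radius (Abs_fps H) > 0"
    by (rule fps_conv_radius_pos_if_summable) (use \<rho> in simp)
  have "poly ?A 0 = q d"
    by (simp add: poly_0_coeff_0 coeff_sum)
  then show "monom 1 (E + 1) * ?A \<noteq> 0"
    using qd by auto
  have "\<forall>\<^sub>F w in at (0::complex). w \<noteq> 0"
    by (rule eventually_neq_at_within)
  moreover have "\<forall>\<^sub>F w in at (0::complex). norm w < \<rho>"
    using eventually_at_ball'[OF \<rho>, of 0 UNIV] by (rule eventually_mono) simp
  ultimately show "\<forall>\<^sub>F w in at 0. poly (monom 1 (E + 1) * ?A) w \<noteq> 0 \<longrightarrow>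
      poly (monom 1 (E + 1) * ?A) w * eval_fps (Abs_fps H) w = poly (monom 1 d * ?B) w"
  proof eventually_elim
    case (elim w)
    let ?Q = "\<Sum>i\<le>d. q i * (1 / w) ^ i" and ?P = "\<Sum>i\<le>E. p i * (1 / w) ^ i"
    have "(\<lambda>j. H j * w ^ (j + 1) / w) sums (G w / w)"
      using sums_divide[OF sums[OF elim]] .
    then have evH: "eval_fps (Abs_fps H) w = G w / w"
      using elim unfolding eval_fps_def by (simp add: sums_iff)
    have A: "poly (monom 1 (E + 1) * ?A) w = w ^ (E + 1) * w ^ d * ?Q"
      by (simp add: poly_monom poly_reversed_monoms[OF elim(1)])
    have B: "poly (monom 1 d * ?B) w = w ^ d * w ^ E * ?P"
      by (simp add: poly_monom poly_reversed_monoms[OF elim(1)])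
    show ?case
    proof
      assume "poly (monom 1 (E + 1) * ?A) w \<noteq> 0"
      then have "?Q * G w = ?P"
        using A by (intro eq[OF elim]) auto
      moreover have "w ^ (E + 1) * w ^ d * ?Q * (G w / w) = w ^ d * w ^ E * (?Q * G w)"
        using elim(1) by (simp add: power_add field_simps)
      ultimately show "poly (monom 1 (E + 1) * ?A) w * eval_fps (Abs_fps H) w = poly (monom 1 d * ?B) w"
        unfolding A B evH by simp
    qed
  qed
qed

lemma laurent_coeff_recurrence:
  fixes H q p :: "nat \<Rightarrow> complex" and G :: "complex \<Rightarrow> complex"
  assumes qd: "q d \<noteq> 0" and \<rho>: "\<rho> > 0"
    and sums: "\<And>w. w \<noteq> 0 \<Longrightarrow> norm w < \<rho> \<Longrightarrow> (\<lambda>j. H j * w ^ (j + 1)) sums G w"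
    and eq: "\<And>w. w \<noteq> 0 \<Longrightarrow> norm w < \<rho> \<Longrightarrow> (\<Sum>i\<le>d. q i * (1 / w) ^ i) \<noteq> 0 \<Longrightarrow>
               (\<Sum>i\<le>d. q i * (1 / w) ^ i) * G w = (\<Sum>i\<le>E. p i * (1 / w) ^ i)"
  shows "(\<Sum>i\<le>r. (if i \<le> d then q (d - i) else 0) * H (r - i)) =
           (if r < d \<and> d - 1 - r \<le> E then p (d - 1 - r) else 0)"
proof -
  define A where "A = (\<Sum>s\<le>d. monom (q (d - s)) s)"
  define B where "B = (\<Sum>s\<le>E. monom (p (E - s)) s)"
  have "fps_of_poly (monom 1 (E + 1) * A) * Abs_fps H = fps_of_poly (monom 1 d * B)"
    unfolding A_def B_def using qd \<rho> sums eq by (rule laurent_fps_identity)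
  then have "fps_nth (fps_X ^ (E + 1) * (fps_of_poly A * Abs_fps H)) (E + 1 + r) =
             fps_nth (fps_X ^ d * fps_of_poly B) (E + 1 + r)"
    by (simp only: fps_of_poly_mult fps_of_poly_monom' mult.assoc)
  moreover have "fps_nth (fps_X ^ (E + 1) * (fps_of_poly A * Abs_fps H)) (E + 1 + r) =
      (\<Sum>i\<le>r. (if i \<le> d then q (d - i) else 0) * H (r - i))"
  proof -
    have "coeff A i = (if i \<le> d then q (d - i) else 0)" for i
      by (simp add: A_def coeff_sum)
    then show ?thesis
      by (simp only: fps_X_power_mult_nth) (simp add: fps_mult_nth atLeast0AtMost)
  qed
  moreover have "fps_nth (fps_X ^ d * fps_of_poly B) (E + 1 + r) =
      (if r < d \<and> d - 1 - r \<le> E then p (d - 1 - r) else 0)"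
  proof -
    have "coeff B s = (if s \<le> E then p (E - s) else 0)" for s
      by (simp add: B_def coeff_sum)
    then show ?thesis
      by (simp only: fps_X_power_mult_nth) (auto intro!: arg_cong[where f = p])
  qed
  ultimately show ?thesis by simp
qed

section \<open>Generating functions\<close>

lemma has_sum_finite_sum:
  fixes f :: "'i \<Rightarrow> 'a \<Rightarrow> 'b::topological_comm_monoid_add"
  assumes "finite I" "\<And>i. i \<in> I \<Longrightarrow> (f i has_sum s i) A"
  shows "((\<lambda>x. \<Sum>i\<in>I. f i x) has_sum (\<Sum>i\<in>I. s i)) A"
  using assms by (induction I rule: finite_induct) (auto intro: has_sum_add)

lemma finite_le_fun: "finite {\<alpha>::'n::finite \<Rightarrow> nat. \<alpha> \<le> m}"
proof (rule finite_subset)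
  show "{\<alpha>. \<alpha> \<le> m} \<subseteq> PiE UNIV (\<lambda>k. {..m k})" by (auto simp: le_fun_def PiE_iff)
qed (rule finite_PiE; simp)

definition genfun :: "(('n::finite \<Rightarrow> nat) \<Rightarrow> complex) \<Rightarrow> ('n \<Rightarrow> nat) set \<Rightarrow> ('n \<Rightarrow> complex) \<Rightarrow> complex" where
  "genfun g A z = (\<Sum>\<^sub>\<infinity>x\<in>A. g x / mpow z (\<lambda>l. x l + 1))"

abbreviation genfun_summable :: "(('n::finite \<Rightarrow> nat) \<Rightarrow> complex) \<Rightarrow> ('n \<Rightarrow> complex) \<Rightarrow> bool" where
  "genfun_summable g z \<equiv> (\<lambda>x. g x / mpow z (\<lambda>l. x l + 1)) summable_on UNIV"

definition genfun_coeff :: "(('n::finite \<Rightarrow> nat) \<Rightarrow> complex) \<Rightarrow> 'n \<Rightarrow> nat \<Rightarrow> ('n \<Rightarrow> complex) \<Rightarrow> complex" where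
  "genfun_coeff g k j z = (\<Sum>\<^sub>\<infinity>x\<in>{x. x k = j}. g x / mpow z ((\<lambda>l. x l + 1)(k := 0)))"

lemma genfun_coeff_has_sum:
  assumes summ: "genfun_summable g (z(k := t))" and t: "t \<noteq> 0"
  shows "((\<lambda>x. g x / mpow (z(k := t)) (\<lambda>l. x l + 1)) has_sum (genfun_coeff g k j z / t ^ (j + 1)))
           {x. x k = j}"
proof -
  define F where "F x = g x / mpow (z(k := t)) (\<lambda>l. x l + 1)" for x
  have F: "F x * t ^ (j + 1) = g x / mpow z ((\<lambda>l. x l + 1)(k := 0))" if "x \<in> {x. x k = j}" for x
    using that t by (simp add: F_def mpow_fun_upd)
  have "F summable_on {x. x k = j}"
    using summable_on_subset_banach[OF summ[folded F_def]] by blast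
  then have hs: "(F has_sum infsum F {x. x k = j}) {x. x k = j}"
    by (rule has_sum_infsum)
  then have "((\<lambda>x. F x * t ^ (j + 1)) has_sum (infsum F {x. x k = j} * t ^ (j + 1))) {x. x k = j}"
    by (rule has_sum_cmult_left)
  then have "((\<lambda>x. g x / mpow z ((\<lambda>l. x l + 1)(k := 0))) has_sum (infsum F {x. x k = j} * t ^ (j + 1)))
      {x. x k = j}"
    by (rule has_sum_cong[THEN iffD1, rotated]) (use F in simp)
  then have "genfun_coeff g k j z = infsum F {x. x k = j} * t ^ (j + 1)"
    unfolding genfun_coeff_def by (rule infsumI)
  with hs t show ?thesis unfolding F_def by simp
qed

lemma genfun_slab_eq:
  assumes summ: "genfun_summable g z" and t: "z k \<noteq> 0"
  shows "genfun g {x. x k < a} z = (\<Sum>j<a. genfun_coeff g k j z / z k ^ (j + 1))"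
proof -
  have hs: "((\<lambda>x. g x / mpow z (\<lambda>l. x l + 1)) has_sum (genfun_coeff g k j z / z k ^ (j + 1))) {x. x k = j}"
    for j
    using genfun_coeff_has_sum[of g z k "z k" j] summ t by simp
  have "(\<Sum>j<a. genfun_coeff g k j z / z k ^ (j + 1)) =
      (\<Sum>j<a. \<Sum>\<^sub>\<infinity>x\<in>{x. x k = j}. g x / mpow z (\<lambda>l. x l + 1))"
    by (intro sum.cong refl) (rule infsumI[OF hs, symmetric])
  also have "\<dots> = (\<Sum>\<^sub>\<infinity>x\<in>(\<Union>j<a. {x. x k = j}). g x / mpow z (\<lambda>l. x l + 1))"
    by (rule sum_infsum) (use hs in \<open>auto simp: summable_on_def\<close>)
  also have "(\<Union>j<a. {x. x k = j}) = {x. x k < a}" by auto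
  finally show ?thesis unfolding genfun_def by simp
qed

lemma genfun_sums_coeffs:
  assumes summ: "genfun_summable g (z(k := t))" and t: "t \<noteq> 0"
  shows "(\<lambda>j. genfun_coeff g k j z / t ^ (j + 1)) sums genfun g UNIV (z(k := t))"
proof -
  define F where "F x = g x / mpow (z(k := t)) (\<lambda>l. x l + 1)" for x
  define h where "h x = (x k, x)" for x :: "'a \<Rightarrow> nat"
  have inj: "inj h" unfolding h_def by (auto intro: injI)
  have img: "range h = Sigma UNIV (\<lambda>j. {x. x k = j})" unfolding h_def by auto
  have "(F has_sum genfun g UNIV (z(k := t))) UNIV"
    using summ unfolding F_def genfun_def by (simp add: has_sum_infsum)
  then have "((\<lambda>(j, x). F x) has_sum genfun g UNIV (z(k := t))) (Sigma UNIV (\<lambda>j. {x. x k = j}))"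
    unfolding img[symmetric] by (subst has_sum_reindex[OF inj]) (simp add: h_def o_def)
  then have "((\<lambda>j. genfun_coeff g k j z / t ^ (j + 1)) has_sum genfun g UNIV (z(k := t))) UNIV"
    by (rule has_sum_Sigma') (use genfun_coeff_has_sum[OF summ t] in \<open>simp add: F_def\<close>)
  then show ?thesis by (rule has_sum_imp_sums)
qed

lemma genfun_restrict: "genfun (\<lambda>x. if x \<in> A then g x else 0) B z = genfun g (A \<inter> B) z"
  unfolding genfun_def by (rule infsum_cong_neutral) auto

lemma genfun_summable_restrict:
  assumes "genfun_summable g z"
  shows "genfun_summable (\<lambda>x. if x \<in> A then g x else 0) z"
proof -
  have "(\<lambda>x. g x / mpow z (\<lambda>l. x l + 1)) summable_on A"
    using summable_on_subset_banach[OF assms] by blast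
  then show ?thesis
    by (subst summable_on_cong_neutral[where T = A]) auto
qed

lemma genfun_split:
  assumes "genfun_summable g z"
  shows "genfun g A z = genfun g (A \<inter> B) z + genfun g (A - B) z"
proof -
  have "genfun g ((A \<inter> B) \<union> (A - B)) z = genfun g (A \<inter> B) z + genfun g (A - B) z"
    unfolding genfun_def
    by (rule infsum_Un_disjoint) (use summable_on_subset_banach[OF assms] in auto)
  moreover have "(A \<inter> B) \<union> (A - B) = A" by auto
  ultimately show ?thesis by simp
qed

lemma genfun_shift_has_sum:
  assumes summ: "genfun_summable f z" and nz: "\<And>l. z l \<noteq> 0"
  shows "((\<lambda>x. f (\<lambda>l. x l + \<alpha> l) / mpow z (\<lambda>l. x l + 1)) has_sum (mpow z \<alpha> * genfun f {y. \<alpha> \<le> y} z)) UNIV"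
proof -
  define h where "h x = (\<lambda>l. x l + \<alpha> l)" for x :: "'a \<Rightarrow> nat"
  define T where "T y = f y / mpow z (\<lambda>l. y l + 1)" for y
  have inj: "inj h"
  proof (rule injI)
    fix x y assume "h x = h y"
    then show "x = y" unfolding h_def by (metis add_right_cancel ext)
  qed
  have img: "range h = {y. \<alpha> \<le> y}"
  proof safe
    fix y assume "\<alpha> \<le> y"
    then have "y = h (\<lambda>l. y l - \<alpha> l)" unfolding h_def by (auto simp: le_fun_def)
    then show "y \<in> range h" by blast
  qed (simp add: h_def le_fun_def)
  have "(T has_sum genfun f {y. \<alpha> \<le> y} z) {y. \<alpha> \<le> y}"
    unfolding T_def genfun_def using summable_on_subset_banach[OF summ] by (simp add: has_sum_infsum)
  then have "((T \<circ> h) has_sum genfun f {y. \<alpha> \<le> y} z) UNIV"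
    by (simp add: img[symmetric] has_sum_reindex[OF inj])
  then have "((\<lambda>x. mpow z \<alpha> * (T \<circ> h) x) has_sum (mpow z \<alpha> * genfun f {y. \<alpha> \<le> y} z)) UNIV"
    by (rule has_sum_cmult_right)
  moreover have "mpow z \<alpha> * (T \<circ> h) x = f (\<lambda>l. x l + \<alpha> l) / mpow z (\<lambda>l. x l + 1)" for x
  proof -
    have "mpow z (\<lambda>l. x l + \<alpha> l + 1) = mpow z (\<lambda>l. x l + 1) * mpow z \<alpha>"
      using mpow_add[where \<alpha> = "\<lambda>l. x l + 1" and \<beta> = \<alpha>] by (simp add: ac_simps)
    moreover have "mpow z \<alpha> \<noteq> 0" using nz by (rule mpow_nonzero)
    ultimately show ?thesis by (simp add: T_def h_def)
  qed
  ultimately show ?thesis by simp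
qed

lemma fun_upd_inverse_in_nbhd_inf:
  assumes "z \<in> nbhd_inf R" "w \<noteq> 0" "norm w < 1 / (\<bar>R\<bar> + 1)"
  shows "z(k := 1 / w) \<in> nbhd_inf R"
proof -
  have "norm w * (\<bar>R\<bar> + 1) < 1"
    using assms(3) by (simp add: field_simps add_pos_nonneg)
  then have "\<bar>R\<bar> + 1 < norm (1 / w)"
    using assms(2) by (simp add: norm_divide field_simps)
  then show ?thesis
    using assms(1) unfolding nbhd_inf_def by auto
qed

lemma genfun_coeff_recurrence:
  assumes summ: "\<And>z. z \<in> nbhd_inf R \<Longrightarrow> genfun_summable g z"
    and PQ: "\<And>z. z \<in> nbhd_inf R \<Longrightarrow> Q z \<noteq> 0 \<Longrightarrow> genfun g UNIV z = P z / Q z"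
    and q: "\<And>i z t. q i (z(k := t)) = q i z" "\<And>z. Q z = (\<Sum>i\<le>d. q i z * z k ^ i)"
    and p: "\<And>i z t. p i (z(k := t)) = p i z" "\<And>z. P z = (\<Sum>i\<le>E. p i z * z k ^ i)"
    and z: "z \<in> nbhd_inf R" "q d z \<noteq> 0"
  shows "(\<Sum>i\<le>r. (if i \<le> d then q (d - i) z else 0) * genfun_coeff g k (r - i) z) =
    (if r < d \<and> d - 1 - r \<le> E then p (d - 1 - r) z else 0)"
proof (rule laurent_coeff_recurrence[where G = "\<lambda>w. genfun g UNIV (z(k := 1 / w))"])
  show "q d z \<noteq> 0" by (rule z(2))
  show "1 / (\<bar>R\<bar> + 1) > 0" by (simp add: add_pos_nonneg)
next
  fix w :: complex assume w: "w \<noteq> 0" "norm w < 1 / (\<bar>R\<bar> + 1)"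
  have zw: "z(k := 1 / w) \<in> nbhd_inf R"
    using z(1) w by (rule fun_upd_inverse_in_nbhd_inf)
  have "(\<lambda>j. genfun_coeff g k j z / (1 / w) ^ (j + 1)) sums genfun g UNIV (z(k := 1 / w))"
    by (rule genfun_sums_coeffs) (use summ zw w in auto)
  then show "(\<lambda>j. genfun_coeff g k j z * w ^ (j + 1)) sums genfun g UNIV (z(k := 1 / w))"
    by (simp add: power_one_over)
  have "Q (z(k := 1 / w)) = (\<Sum>i\<le>d. q i z * (1 / w) ^ i)" "P (z(k := 1 / w)) = (\<Sum>i\<le>E. p i z * (1 / w) ^ i)"
    using q p by simp_all
  moreover assume "(\<Sum>i\<le>d. q i z * (1 / w) ^ i) \<noteq> 0"
  ultimately show "(\<Sum>i\<le>d. q i z * (1 / w) ^ i) * genfun g UNIV (z(k := 1 / w)) = (\<Sum>i\<le>E. p i z * (1 / w) ^ i)"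
    using PQ[OF zw] by simp
qed

lemma genfun_coeff_rational:
  assumes summ: "\<And>z. z \<in> nbhd_inf R \<Longrightarrow> genfun_summable g z"
    and rat: "rational_on (nbhd_inf R) (genfun g UNIV)"
  shows "rational_on (nbhd_inf R) (genfun_coeff g k r)"
proof -
  obtain P Q w where PQ: "poly_fun P" "poly_fun Q" "Q w \<noteq> 0"
      "\<And>z. z \<in> nbhd_inf R \<Longrightarrow> Q z \<noteq> 0 \<Longrightarrow> genfun g UNIV z = P z / Q z"
    using rat by (rule rational_onE) blast
  obtain d q where q: "\<And>i. poly_fun (q i)" "\<And>i z t. q i (z(k := t)) = q i z"
      "\<And>z. Q z = (\<Sum>i\<le>d. q i z * z k ^ i)" "(\<exists>z. Q z \<noteq> 0) \<Longrightarrow> \<exists>z. q d z \<noteq> 0"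
    using PQ(2) by (rule poly_fun_expand_var[where k = k]) blast
  obtain zd where zd: "q d zd \<noteq> 0" using q(4) PQ(3) by blast
  obtain E p where p: "\<And>i. poly_fun (p i)" "\<And>i z t. p i (z(k := t)) = p i z"
      "\<And>z. P z = (\<Sum>i\<le>E. p i z * z k ^ i)"
    using PQ(1) by (rule poly_fun_expand_var[where k = k]) blast
  define V where "V = {z \<in> nbhd_inf R. q d z \<noteq> 0}"
  have rec: "(\<Sum>i\<le>r. (if i \<le> d then q (d - i) z else 0) * genfun_coeff g k (r - i) z) =
      (if r < d \<and> d - 1 - r \<le> E then p (d - 1 - r) z else 0)" if "z \<in> V" for z r
    by (rule genfun_coeff_recurrence[OF summ PQ(4) q(2,3) p(2,3)]) (use that in \<open>auto simp: V_def\<close>)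
  txt \<open>The recurrence determines \<open>q d * genfun_coeff g k r\<close> from the earlier coefficients,
    and \<open>q d\<close> does not vanish on \<open>V\<close>.\<close>
  have "rational_on V (genfun_coeff g k r)"
  proof (induction r rule: less_induct)
    case (less r)
    define lower where "lower z = (\<Sum>i<r. (if Suc i \<le> d then q (d - Suc i) z else 0) *
        genfun_coeff g k (r - Suc i) z)" for z
    define rhs where "rhs z = (if r < d \<and> d - 1 - r \<le> E then p (d - 1 - r) z else 0)" for z
    have "rational_on V (\<lambda>z. (rhs z - lower z) / q d z)"
      unfolding rhs_def lower_def
      by (intro rational_on_divide_poly_fun[OF _ q(1) zd] rational_on_diff rational_on_sum
          rational_on_mult rational_on_poly_fun poly_fun_if p(1) q(1) less.IH) auto
    moreover have "genfun_coeff g k r z = (rhs z - lower z) / q d z" if "z \<in> V" for z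
      using rec[OF that, of r] that unfolding V_def lower_def rhs_def
      by (simp add: sum.atMost_shift field_simps)
    ultimately show ?case by (rule rational_on_cong)
  qed
  then show ?thesis
    by (rule rational_on_eq_outside_zeros[OF _ q(1) zd]) (auto simp: V_def)
qed

lemma genfun_slab_rational:
  assumes summ: "\<And>z. z \<in> nbhd_inf R \<Longrightarrow> genfun_summable g z"
    and rat: "rational_on (nbhd_inf R) (genfun g UNIV)"
  shows "rational_on (nbhd_inf R) (genfun g {x. x k < a})"
proof -
  have "rational_on (nbhd_inf R) (\<lambda>z. \<Sum>j<a. genfun_coeff g k j z / z k ^ (j + 1))"
    by (intro rational_on_sum rational_on_divide_poly_fun[where w = "\<lambda>_. 1"]
        genfun_coeff_rational[OF summ rat] poly_fun_power poly_fun_var) auto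
  then show ?thesis
  proof (rule rational_on_eq_outside_zeros[OF _ poly_fun_var[of k], where w = "\<lambda>_. 1"])
    fix z assume "z \<in> nbhd_inf R" "z k \<noteq> 0"
    then show "z \<in> nbhd_inf R \<and> genfun g {x. x k < a} z = (\<Sum>j<a. genfun_coeff g k j z / z k ^ (j + 1))"
      using summ genfun_slab_eq by blast
  qed simp
qed

lemma genfun_orthant_rational:
  assumes summ: "\<And>z. z \<in> nbhd_inf R \<Longrightarrow> genfun_summable g z"
    and rat: "rational_on (nbhd_inf R) (genfun g UNIV)"
  shows "rational_on (nbhd_inf R) (genfun g {x. \<forall>k\<in>K. a k \<le> x k})"
  using finite[of K]
proof (induction K rule: finite_induct)
  case empty
  then show ?case using rat by simp
next
  case (insert j K)
  define A where "A = {x. \<forall>k\<in>K. a k \<le> x k}"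
  define gA where "gA x = (if x \<in> A then g x else 0)" for x
  have "rational_on (nbhd_inf R) (genfun gA {x. x j < a j})"
  proof (rule genfun_slab_rational)
    show "genfun_summable gA z" if "z \<in> nbhd_inf R" for z
      unfolding gA_def using summ[OF that] by (rule genfun_summable_restrict)
    show "rational_on (nbhd_inf R) (genfun gA UNIV)"
      using insert.IH unfolding gA_def genfun_restrict A_def by simp
  qed
  then have "rational_on (nbhd_inf R) (\<lambda>z. genfun g A z - genfun g (A \<inter> {x. x j < a j}) z)"
    unfolding gA_def genfun_restrict by (intro rational_on_diff insert.IH[folded A_def])
  moreover have "A - {x. x j < a j} = {x. \<forall>k\<in>insert j K. a k \<le> x k}"
    unfolding A_def by auto
  then have "genfun g {x. \<forall>k\<in>insert j K. a k \<le> x k} z = genfun g A z - genfun g (A \<inter> {x. x j < a j}) z"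
    if "z \<in> nbhd_inf R" for z
    using genfun_split[OF summ[OF that], of A "{x. x j < a j}"] by simp
  ultimately show ?case by (rule rational_on_cong)
qed

lemma genfun_not_ge_rational:
  assumes summ: "\<And>z. z \<in> nbhd_inf R \<Longrightarrow> genfun_summable g z"
    and rat: "rational_on (nbhd_inf R) (genfun g UNIV)"
  shows "rational_on (nbhd_inf R) (genfun g {x. \<not> a \<le> x})"
proof -
  have "rational_on (nbhd_inf R) (\<lambda>z. genfun g UNIV z - genfun g {x. \<forall>k\<in>UNIV. a k \<le> x k} z)"
    by (intro rational_on_diff rat genfun_orthant_rational[OF summ rat])
  moreover have "UNIV - {x. \<forall>k\<in>UNIV. a k \<le> x k} = {x. \<not> a \<le> x}"
    by (auto simp: le_fun_def)
  then have "genfun g {x. \<not> a \<le> x} z = genfun g UNIV z - genfun g {x. \<forall>k\<in>UNIV. a k \<le> x k} z"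
    if "z \<in> nbhd_inf R" for z
    using genfun_split[OF summ[OF that], of UNIV "{x. \<forall>k\<in>UNIV. a k \<le> x k}"] by simp
  ultimately show ?thesis by (rule rational_on_cong)
qed

definition char_poly :: "(('n::finite \<Rightarrow> nat) \<Rightarrow> complex) \<Rightarrow> ('n \<Rightarrow> nat) \<Rightarrow> ('n \<Rightarrow> complex) \<Rightarrow> complex" where
  "char_poly c m z = (\<Sum>\<alpha>\<in>{\<alpha>. \<alpha> \<le> m}. c \<alpha> * mpow z \<alpha>)"

lemma poly_fun_char_poly: "poly_fun (char_poly c m)"
  unfolding char_poly_def by (rule poly_funI[OF finite_le_fun, where e = id]) simp

lemma char_poly_nonzero:
  assumes "c m \<noteq> 0" "\<And>\<alpha>. \<not> \<alpha> \<le> m \<Longrightarrow> c \<alpha> = 0"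
  obtains w where "char_poly c m w \<noteq> 0"
proof -
  have "is_mpoly c"
    unfolding is_mpoly_def using assms(2) by (blast intro: finite_subset[OF _ finite_le_fun])
  then obtain w where "mpoly_eval c w \<noteq> 0"
    using mpoly_eval_nonzero assms(1) by blast
  moreover have "mpoly_eval c w = char_poly c m w"
    unfolding char_poly_def using assms(2) by (intro mpoly_eval_eq_sum finite_le_fun) blast
  ultimately show thesis using that by simp
qed

lemma genfun_recurrence_identity:
  assumes rec: "\<And>x. (\<Sum>\<alpha>\<in>{\<alpha>. \<alpha> \<le> m}. c \<alpha> * f (\<lambda>k. x k + \<alpha> k)) = 0"
    and summ: "genfun_summable f z" and nz: "\<And>l. z l \<noteq> 0"
  shows "char_poly c m z * genfun f UNIV z =
    (\<Sum>\<alpha>\<in>{\<alpha>. \<alpha> \<le> m}. c \<alpha> * mpow z \<alpha> * genfun f {y. \<not> \<alpha> \<le> y} z)"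
proof -
  let ?M = "{\<alpha>. \<alpha> \<le> m}"
  have "((\<lambda>x. \<Sum>\<alpha>\<in>?M. c \<alpha> * (f (\<lambda>l. x l + \<alpha> l) / mpow z (\<lambda>l. x l + 1))) has_sum
      (\<Sum>\<alpha>\<in>?M. c \<alpha> * (mpow z \<alpha> * genfun f {y. \<alpha> \<le> y} z))) UNIV"
    by (intro has_sum_finite_sum finite_le_fun has_sum_cmult_right genfun_shift_has_sum summ nz)
  moreover have "((\<lambda>x. \<Sum>\<alpha>\<in>?M. c \<alpha> * (f (\<lambda>l. x l + \<alpha> l) / mpow z (\<lambda>l. x l + 1))) has_sum 0) UNIV"
  proof (rule has_sum_0)
    fix x
    have "(\<Sum>\<alpha>\<in>?M. c \<alpha> * (f (\<lambda>l. x l + \<alpha> l) / mpow z (\<lambda>l. x l + 1))) =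
        (\<Sum>\<alpha>\<in>?M. c \<alpha> * f (\<lambda>l. x l + \<alpha> l)) / mpow z (\<lambda>l. x l + 1)"
      by (simp add: sum_divide_distrib)
    then show "(\<Sum>\<alpha>\<in>?M. c \<alpha> * (f (\<lambda>l. x l + \<alpha> l) / mpow z (\<lambda>l. x l + 1))) = 0"
      using rec[of x] by simp
  qed
  ultimately have "(\<Sum>\<alpha>\<in>?M. c \<alpha> * (mpow z \<alpha> * genfun f {y. \<alpha> \<le> y} z)) = 0"
    by (rule has_sum_unique)
  moreover have "genfun f {y. \<alpha> \<le> y} z = genfun f UNIV z - genfun f {y. \<not> \<alpha> \<le> y} z" for \<alpha>
  proof -
    have "UNIV - {y. \<alpha> \<le> y} = {y. \<not> \<alpha> \<le> y}" by auto
    then show ?thesis using genfun_split[OF summ, of UNIV "{y. \<alpha> \<le> y}"] by simp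
  qed
  ultimately have "(\<Sum>\<alpha>\<in>?M. c \<alpha> * mpow z \<alpha> * genfun f UNIV z - c \<alpha> * mpow z \<alpha> * genfun f {y. \<not> \<alpha> \<le> y} z) = 0"
    by (simp add: right_diff_distrib mult.assoc)
  then show ?thesis
    by (simp add: char_poly_def sum_subtractf sum_distrib_right)
qed

lemma genfun_tail_rational:
  assumes summ: "\<And>z. z \<in> nbhd_inf R \<Longrightarrow> genfun_summable f z"
    and rat: "rational_on (nbhd_inf R) (genfun f {x. \<not> m \<le> x})"
    and "\<alpha> \<le> m"
  shows "rational_on (nbhd_inf R) (genfun f {y. \<not> \<alpha> \<le> y})"
proof -
  define f0 where "f0 = (\<lambda>x. if x \<in> {x. \<not> m \<le> x} then f x else 0)"
  have "rational_on (nbhd_inf R) (genfun f0 {y. \<not> \<alpha> \<le> y})"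
  proof (rule genfun_not_ge_rational)
    show "genfun_summable f0 z" if "z \<in> nbhd_inf R" for z
      unfolding f0_def using summ[OF that] by (rule genfun_summable_restrict)
    show "rational_on (nbhd_inf R) (genfun f0 UNIV)"
      using rat unfolding f0_def genfun_restrict by simp
  qed
  moreover have "{x. \<not> m \<le> x} \<inter> {y. \<not> \<alpha> \<le> y} = {y. \<not> \<alpha> \<le> y}"
    using assms(3) order_trans by blast
  ultimately show ?thesis unfolding f0_def genfun_restrict by simp
qed

lemma genfun_rational_if_initial_rational:
  fixes m :: "'n::finite \<Rightarrow> nat"
  assumes cm: "c m \<noteq> 0" and c_supp: "\<And>\<alpha>. \<not> \<alpha> \<le> m \<Longrightarrow> c \<alpha> = 0"
    and rec: "\<And>x. (\<Sum>\<alpha>\<in>{\<alpha>. \<alpha> \<le> m}. c \<alpha> * f (\<lambda>k. x k + \<alpha> k)) = 0"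
    and summ: "\<And>z. z \<in> nbhd_inf R \<Longrightarrow> genfun_summable f z"
    and rat: "rational_on (nbhd_inf R) (genfun f {x. \<not> m \<le> x})"
  shows "rational_on (nbhd_inf R) (genfun f UNIV)"
proof -
  define tails where "tails z = (\<Sum>\<alpha>\<in>{\<alpha>. \<alpha> \<le> m}. c \<alpha> * mpow z \<alpha> * genfun f {y. \<not> \<alpha> \<le> y} z)" for z
  have "rational_on (nbhd_inf R) (\<lambda>z. tails z / char_poly c m z)"
  proof -
    obtain w where "char_poly c m w \<noteq> 0" using cm c_supp by (rule char_poly_nonzero)
    then show ?thesis
      unfolding tails_def
      by (intro rational_on_divide_poly_fun[OF _ poly_fun_char_poly] rational_on_sum finite_le_fun
          rational_on_mult rational_on_poly_fun poly_fun_mult poly_fun_const poly_fun_mpow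
          genfun_tail_rational[OF summ rat]) auto
  qed
  moreover have coords: "poly_fun (\<lambda>z. \<Prod>l\<in>UNIV. z l)"
    by (intro poly_fun_prod poly_fun_var) auto
  then have "poly_fun (\<lambda>z. (\<Prod>l\<in>UNIV. z l) * char_poly c m z)"
    by (intro poly_fun_mult poly_fun_char_poly)
  moreover obtain w where "(\<Prod>l\<in>UNIV. w l) * char_poly c m w \<noteq> 0"
  proof -
    obtain w where "char_poly c m w \<noteq> 0" using cm c_supp by (rule char_poly_nonzero)
    then show thesis
      using that poly_fun_common_nonzero[OF coords poly_fun_char_poly[of c m], where u = "\<lambda>_. 1" and w = w]
      by auto
  qed
  ultimately show ?thesis
  proof (rule rational_on_eq_outside_zeros)
    fix z assume z: "z \<in> nbhd_inf R" "(\<Prod>l\<in>UNIV. z l) * char_poly c m z \<noteq> 0"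
    then have "char_poly c m z * genfun f UNIV z = tails z"
      unfolding tails_def by (intro genfun_recurrence_identity rec summ) auto
    with z show "z \<in> nbhd_inf R \<and> genfun f UNIV z = tails z / char_poly c m z"
      by (auto simp: field_simps)
  qed
qed

theorem theorem3:
  fixes m :: "'n::finite \<Rightarrow> nat"
    and c :: "('n \<Rightarrow> nat) \<Rightarrow> complex"
    and \<phi> f :: "('n \<Rightarrow> nat) \<Rightarrow> complex"
    and R :: real
  assumes cm: "c m \<noteq> 0"
    and c_supp: "\<And>\<alpha>. \<not> (\<alpha> \<le> m) \<Longrightarrow> c \<alpha> = 0"
    and rec: "\<And>x. (\<Sum>\<alpha>\<in>{\<alpha>. \<alpha> \<le> m}. c \<alpha> * f (\<lambda>k. x k + \<alpha> k)) = 0"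
    and init: "\<And>\<tau>. (\<exists>k. \<tau> k < m k) \<Longrightarrow> f \<tau> = \<phi> \<tau>"
    and conv: "\<And>z. z \<in> nbhd_inf R \<Longrightarrow> (\<lambda>x. f x / mpow z (\<lambda>k. x k + 1)) summable_on UNIV"
  shows "rational_on (nbhd_inf R) (\<lambda>z. \<Sum>\<^sub>\<infinity>x. f x / mpow z (\<lambda>k. x k + 1))
     \<longleftrightarrow> rational_on (nbhd_inf R)
           (\<lambda>z. \<Sum>\<^sub>\<infinity>\<tau>\<in>{\<tau>. \<exists>k. \<tau> k < m k}. \<phi> \<tau> / mpow z (\<lambda>k. \<tau> k + 1))"
proof -
  have F: "(\<lambda>z. \<Sum>\<^sub>\<infinity>x. f x / mpow z (\<lambda>k. x k + 1)) = genfun f UNIV"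
    by (simp add: genfun_def fun_eq_iff)
  have X0: "{\<tau>. \<exists>k. \<tau> k < m k} = {x. \<not> m \<le> x}"
    by (auto simp: le_fun_def not_le)
  have \<Phi>: "(\<lambda>z. \<Sum>\<^sub>\<infinity>\<tau>\<in>{\<tau>. \<exists>k. \<tau> k < m k}. \<phi> \<tau> / mpow z (\<lambda>k. \<tau> k + 1)) = genfun f {x. \<not> m \<le> x}"
    unfolding genfun_def X0 by (intro ext infsum_cong) (simp add: init flip: X0)
  show ?thesis
    unfolding F \<Phi>
    using genfun_not_ge_rational[OF conv] genfun_rational_if_initial_rational[OF cm c_supp rec conv]
    by blast
qed

end
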